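(* Let $A$ be a semilocal ring, $Z$ a finite $A$-scheme, $Y \subset Z$ a closed subscheme, and $d > 0$. Suppose given a closed immersion $\iota_Y\colon Y \hookrightarrow \mathbb{A}^d_A$ over $A$ and, for every maximal ideal $\mathfrak{m} \subset A$, a closed immersion $\iota_\mathfrak{m}\colon Z_{k_\mathfrak{m}} \hookrightarrow \mathbb{A}^d_{k_\mathfrak{m}}$ over $k_\mathfrak{m}$, such that these are compatible (i.e. $\iota_\mathfrak{m}$ and $\iota_Y$ agree on $Y_{k_\mathfrak{m}}$). Then there is a closed immersion $\iota\colon Z \hookrightarrow \mathbb{A}^d_A$ over $A$ that restricts to $\iota_Y$ on $Y$ and to $\iota_\mathfrak{m}$ on $Z_{k_\mathfrak{m}}$ for every maximal ideal $\mathfrak{m}$.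
   Context: $k_\mathfrak{m}$ denotes the residue field of $A$ at $\mathfrak{m}$. *)

theory Defs
  imports "HOL-Algebra.Algebra"
begin

text \<open>Affine algebraic geometry over a ring, translated to commutative algebra.
  A finite A-scheme Z = Spec B, where B is an A-algebra (structure map phi)
  that is finitely generated as an A-module.\<close>

definition semilocal :: "('a, 'm) ring_scheme \<Rightarrow> bool" where
  "semilocal A \<longleftrightarrow> cring A \<and> finite {m. maximalideal m A}"

definition finite_algebra ::
  "('a, 'm) ring_scheme \<Rightarrow> ('b, 'n) ring_scheme \<Rightarrow> ('a \<Rightarrow> 'b) \<Rightarrow> bool" where
  "finite_algebra A B phi \<longleftrightarrow> cring A \<and> cring B \<and> phi \<in> ring_hom A B \<and>
     (\<exists>S. finite S \<and> S \<subseteq> carrier B \<and>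
        (\<forall>b \<in> carrier B. \<exists>c \<in> S \<rightarrow> carrier A.
            b = (\<Oplus>\<^bsub>B\<^esub> s\<in>S. phi (c s) \<otimes>\<^bsub>B\<^esub> s)))"

text \<open>A d-tuple x of elements of an A-algebra C (structure map psi) generates C
  as an A-algebra, i.e. the A-algebra map A[X_1..X_d] -> C, X_i |-> x i, is
  surjective, i.e. defines a closed immersion Spec C -> affine d-space over A.\<close>

definition generates_algebra ::
  "('a, 'm) ring_scheme \<Rightarrow> ('c, 'n) ring_scheme \<Rightarrow> ('a \<Rightarrow> 'c) \<Rightarrow> nat \<Rightarrow> (nat \<Rightarrow> 'c) \<Rightarrow> bool" where
  "generates_algebra A C psi d x \<longleftrightarrow>
     (\<forall>i<d. x i \<in> carrier C) \<and>
     generate_ring C (psi ` carrier A \<union> x ` {..<d}) = carrier C"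

abbreviation closed_imm ::
  "('a, 'm) ring_scheme \<Rightarrow> ('c, 'n) ring_scheme \<Rightarrow> ('a \<Rightarrow> 'c) \<Rightarrow> nat \<Rightarrow> (nat \<Rightarrow> 'c) \<Rightarrow> bool" where
  "closed_imm \<equiv> generates_algebra"

text \<open>Extension of the maximal ideal m to B: the ideal mB; B Quot mB is the
  coordinate ring of the fibre Z over k_m = A/m.\<close>
definition ext_ideal :: "('b, 'n) ring_scheme \<Rightarrow> ('a \<Rightarrow> 'b) \<Rightarrow> 'a set \<Rightarrow> 'b set" where
  "ext_ideal B phi m = Idl\<^bsub>B\<^esub> (phi ` m)"

end

theory Submission
  imports Defs
begin

(* Lift each coordinate y_i through B -> B/I and simultaneously through all the fibres B -> B/mB:
   the cosets y_i and z_{m,i} meet by compatibility, and the ideals mB are pairwise comaximal, so a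
   Chinese remainder argument yields a common lift x_i. The A-subalgebra R of B generated by the x_i
   then satisfies R + mB = B for every maximal ideal m, since the x_i generate each fibre. Gluing
   these finitely many equalities with elements that lie in all but one maximal ideal gives
   R + J B = B for the Jacobson radical J of A, and Nakayama's lemma for the finite A-module B
   yields R = B. *)

no_notation Sum_Type.Plus (infixr \<open><+>\<close> 65)

section \<open>Maximal ideals and the Jacobson radical\<close>

lemma (in cring) exists_maximalideal_superset:
  assumes "ideal I R" "\<one> \<notin> I"
  shows "\<exists>m. maximalideal m R \<and> I \<subseteq> m"
proof -
  define SS where "SS = {J. ideal J R \<and> I \<subseteq> J \<and> \<one> \<notin> J}"
  have "\<exists>M\<in>SS. \<forall>K\<in>SS. M \<subseteq> K \<longrightarrow> K = M"
  proof (rule subset_Zorn_nonempty)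
    show "SS \<noteq> {}" using assms SS_def by auto
  next
    fix C assume C: "C \<noteq> {}" "subset.chain SS C"
    have "subset.chain {J. ideal J R} C" using C(2) unfolding pred_on.chain_def SS_def by auto
    from chain_Union_is_ideal[OF this] C(1) have "ideal (\<Union>C) R" by simp
    moreover have "I \<subseteq> \<Union>C" "\<one> \<notin> \<Union>C" using C unfolding pred_on.chain_def SS_def by blast+
    ultimately show "\<Union>C \<in> SS" unfolding SS_def by auto
  qed
  then obtain M where M: "M \<in> SS" "\<And>K. K \<in> SS \<Longrightarrow> M \<subseteq> K \<Longrightarrow> K = M" by auto
  have "maximalideal M R"
  proof (rule maximalidealI)
    show "ideal M R" "carrier R \<noteq> M" using M SS_def by auto
    fix J assume J: "ideal J R" "M \<subseteq> J" "J \<subseteq> carrier R"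
    show "J = M \<or> J = carrier R"
      using M J SS_def ideal.one_imp_carrier[OF J(1)] by (cases "\<one> \<in> J") auto
  qed
  thus ?thesis using M SS_def by auto
qed

definition jacobson :: "('a, 'b) ring_scheme \<Rightarrow> 'a set" where
  "jacobson R = carrier R \<inter> \<Inter>{m. maximalideal m R}"

lemma (in ring) ideal_carrier_Int_Inter:
  assumes "\<And>I. I \<in> F \<Longrightarrow> ideal I R"
  shows "ideal (carrier R \<inter> \<Inter>F) R"
proof (cases "F = {}")
  case True
  thus ?thesis using oneideal by simp
next
  case False
  then have "carrier R \<inter> \<Inter>F = \<Inter>F" using assms ideal.Icarr by fastforce
  thus ?thesis using i_Intersect[OF assms False] by simp
qed

lemma (in ring) ideal_jacobson: "ideal (jacobson R) R"
  unfolding jacobson_def by (rule ideal_carrier_Int_Inter) (simp add: maximalideal.axioms(1))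

lemma (in cring) jacobson_one_minus_Units:
  assumes "a \<in> jacobson R"
  shows "\<one> \<ominus> a \<in> Units R"
proof (rule ccontr)
  assume not_unit: "\<one> \<ominus> a \<notin> Units R"
  have a: "a \<in> carrier R" using assms unfolding jacobson_def by blast
  then have b: "\<one> \<ominus> a \<in> carrier R" by simp
  have "\<one> \<notin> PIdl (\<one> \<ominus> a)"
    using not_unit ideal_eq_carrier_iff[OF b] ideal.one_imp_carrier[OF cgenideal_ideal[OF b]] by auto
  then obtain m where m: "maximalideal m R" "PIdl (\<one> \<ominus> a) \<subseteq> m"
    using exists_maximalideal_superset[OF cgenideal_ideal[OF b]] by auto
  interpret m: maximalideal m R by fact
  have "\<one> \<ominus> a \<in> m" using m cgenideal_self[OF b] by auto
  moreover have "a \<in> m" using assms m unfolding jacobson_def by blast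
  ultimately have "(\<one> \<ominus> a) \<oplus> a \<in> m" by (simp add: m.a_closed)
  moreover have "(\<one> \<ominus> a) \<oplus> a = \<one>" using a by algebra
  ultimately show False using m.one_imp_carrier m.I_notcarr by auto
qed

lemma (in cring) maximalideals_comaximal:
  assumes m: "maximalideal m R" and m': "maximalideal m' R" and "m \<noteq> m'"
  shows "\<exists>q\<in>m'. \<one> \<ominus> q \<in> m"
proof -
  interpret m: maximalideal m R by (rule m)
  interpret m': maximalideal m' R by (rule m')
  have sum_ideal: "ideal (m <+> m') R" by (rule add_ideals[OF m.is_ideal m'.is_ideal])
  have m_sub: "m \<subseteq> m <+> m'" and m'_sub: "m' \<subseteq> m <+> m'"
    using m.Icarr m'.Icarr m.zero_closed m'.zero_closed unfolding set_add_def'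
    by (force intro: r_zero[symmetric] l_zero[symmetric])+
  have "m <+> m' = carrier R"
  proof (rule ccontr)
    assume "m <+> m' \<noteq> carrier R"
    hence "m <+> m' = m" using m.I_maximal[OF sum_ideal m_sub] ideal.Icarr[OF sum_ideal] by blast
    hence "m' \<subseteq> m" using m'_sub by simp
    thus False using m'.I_maximal[OF m.is_ideal] m.a_subset m.I_notcarr \<open>m \<noteq> m'\<close> by blast
  qed
  then obtain p q where pq: "p \<in> m" "q \<in> m'" "\<one> = p \<oplus> q" unfolding set_add_def' by force
  have "\<one> \<ominus> q = p" using pq m.Icarr m'.Icarr by (simp add: a_minus_def a_assoc r_neg)
  thus ?thesis using pq by blast
qed

lemma (in cring) exists_separating_element:
  assumes "finite F" and J0: "ideal (J m0) R" and J: "\<And>m. m \<in> F \<Longrightarrow> ideal (J m) R"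
    and comax: "\<And>m. m \<in> F \<Longrightarrow> \<exists>q\<in>J m. \<one> \<ominus> q \<in> J m0"
  shows "\<exists>e\<in>carrier R. (\<forall>m\<in>F. e \<in> J m) \<and> \<one> \<ominus> e \<in> J m0"
  using assms(1,3,4)
proof (induction F rule: finite_induct)
  case empty
  interpret J0: ideal "J m0" R by (rule J0)
  have "\<one> \<ominus> \<one> \<in> J m0" using J0.zero_closed by (simp add: minus_eq r_neg)
  thus ?case by blast
next
  case (insert m1 F)
  interpret J0: ideal "J m0" R by (rule J0)
  interpret J1: ideal "J m1" R using insert.prems(1) by blast
  obtain e where e: "e \<in> carrier R" "\<forall>m\<in>F. e \<in> J m" "\<one> \<ominus> e \<in> J m0"
    using insert.IH insert.prems by blast
  obtain q where q: "q \<in> J m1" "\<one> \<ominus> q \<in> J m0" using insert.prems(2) by blast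
  have qR: "q \<in> carrier R" by (rule J1.Icarr[OF q(1)])
  have "e \<otimes> q \<in> J m" if "m \<in> F" for m
    using ideal.I_r_closed[OF insert.prems(1) _ qR] e(2) that by blast
  moreover have "e \<otimes> q \<in> J m1" by (rule J1.I_l_closed[OF q(1) e(1)])
  moreover have "\<one> \<ominus> e \<otimes> q \<in> J m0"
  proof -
    have "\<one> \<ominus> e \<otimes> q = (\<one> \<ominus> q) \<oplus> q \<otimes> (\<one> \<ominus> e)" using qR e(1) by algebra
    thus ?thesis using q(2) J0.I_l_closed[OF e(3) qR] J0.a_closed by simp
  qed
  ultimately show ?case using e(1) qR by (intro bexI[of _ "e \<otimes> q"]) auto
qed

section \<open>Cosets of ideals\<close>

lemma mem_set_add_iff: "x \<in> H <+>\<^bsub>G\<^esub> K \<longleftrightarrow> (\<exists>h\<in>H. \<exists>k\<in>K. x = h \<oplus>\<^bsub>G\<^esub> k)"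
  unfolding set_add_def' by blast

lemma (in ring) a_rcosets_eq_a_r_coset:
  assumes "ideal J R" "C \<in> a_rcosets J" "a \<in> C"
  shows "C = J +> a"
proof -
  interpret J: ideal J R by fact
  obtain c where "c \<in> carrier R" "C = J +> c" using assms(2) unfolding A_RCOSETS_def' by blast
  thus ?thesis using J.a_repr_independence' assms(3) by blast
qed

lemma (in ring) a_rcosets_mem_iff:
  assumes "ideal J R" "C \<in> a_rcosets J" "a \<in> C" "b \<in> carrier R"
  shows "b \<in> C \<longleftrightarrow> b \<ominus> a \<in> J"
proof -
  interpret J: ideal J R by fact
  have "a \<in> carrier R" using J.a_rcosets_carrier assms(2,3) by blast
  then have "b \<in> J +> a \<longleftrightarrow> b \<ominus> a \<in> J" by (rule J.a_rcos_module_minus[OF ring_axioms _ assms(4)])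
  thus ?thesis using a_rcosets_eq_a_r_coset[OF assms(1-3)] by simp
qed

lemma (in ring) a_rcosets_meet:
  assumes I: "ideal I R" and J: "ideal J R"
    and Y: "Y \<in> a_rcosets I" and Z: "Z \<in> a_rcosets J"
    and "u \<in> Y" "v \<in> Z" "u \<ominus> v \<in> I <+> J"
  shows "Y \<inter> Z \<noteq> {}"
proof -
  interpret I: ideal I R by (rule I)
  interpret J: ideal J R by (rule J)
  obtain p q where pq: "p \<in> I" "q \<in> J" "u \<ominus> v = p \<oplus> q"
    using assms(7) unfolding set_add_def' by blast
  have u: "u \<in> carrier R" and v: "v \<in> carrier R"
    using assms(5,6) I.a_rcosets_carrier[OF Y] J.a_rcosets_carrier[OF Z] by blast+
  have p: "p \<in> carrier R" and q: "q \<in> carrier R" using pq I.Icarr J.Icarr by blast+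
  have "(u \<ominus> p) \<ominus> u = \<ominus> p" "(u \<ominus> p) \<ominus> v = q"
    using u v p q pq(3) by algebra+
  then have "u \<ominus> p \<in> Y" "u \<ominus> p \<in> Z"
    using a_rcosets_mem_iff[OF I Y \<open>u \<in> Y\<close>] a_rcosets_mem_iff[OF J Z \<open>v \<in> Z\<close>]
      u p pq I.a_inv_closed by auto
  thus ?thesis by blast
qed

lemma (in cring) chinese_remainder_a_rcosets:
  assumes I: "ideal I R" and "finite F" and J: "\<And>m. m \<in> F \<Longrightarrow> ideal (J m) R"
    and comax: "\<And>m m'. m \<in> F \<Longrightarrow> m' \<in> F \<Longrightarrow> m \<noteq> m' \<Longrightarrow> \<exists>q\<in>J m. \<one> \<ominus> q \<in> J m'"
    and Y: "Y \<in> a_rcosets I" and Z: "\<And>m. m \<in> F \<Longrightarrow> Z m \<in> a_rcosets (J m)"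
    and meet: "\<And>m. m \<in> F \<Longrightarrow> Y \<inter> Z m \<noteq> {}"
  shows "\<exists>x. x \<in> Y \<and> (\<forall>m\<in>F. x \<in> Z m)"
  using assms(2-4,6,7)
proof (induction F rule: finite_induct)
  case empty
  interpret I: ideal I R by (rule I)
  show ?case using Y I.a_rcos_self unfolding A_RCOSETS_def' by blast
next
  case (insert m0 F)
  obtain x' where x': "x' \<in> Y" "\<forall>m\<in>F. x' \<in> Z m" using insert.IH insert.prems by blast
  obtain w where w: "w \<in> Y" "w \<in> Z m0" using insert.prems(4) by blast
  obtain e where e: "e \<in> carrier R" "\<forall>m\<in>F. e \<in> J m" "\<one> \<ominus> e \<in> J m0"
    using exists_separating_element[of F J m0] insert by blast
  interpret I: ideal I R by (rule I)
  have carr: "x' \<in> carrier R" "w \<in> carrier R" using x'(1) w(1) I.a_rcosets_carrier[OF Y] by blast+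
  define x where "x = x' \<oplus> e \<otimes> (w \<ominus> x')"
  have x: "x \<in> carrier R" unfolding x_def using carr e(1) by simp
  have "x \<in> Y"
  proof -
    have "w \<ominus> x' \<in> I" using a_rcosets_mem_iff[OF I Y x'(1)] w(1) carr by blast
    then have "e \<otimes> (w \<ominus> x') \<in> I" by (rule ideal.I_l_closed[OF I _ e(1)])
    moreover have "x \<ominus> x' = e \<otimes> (w \<ominus> x')" unfolding x_def using carr e(1) by algebra
    ultimately show ?thesis using a_rcosets_mem_iff[OF I Y x'(1) x] by simp
  qed
  moreover have "x \<in> Z m" if m: "m \<in> F" for m
  proof -
    have Jm: "ideal (J m) R" "Z m \<in> a_rcosets (J m)" using insert.prems(1,3) m by blast+
    have "(w \<ominus> x') \<otimes> e \<in> J m" using ideal.I_l_closed[OF Jm(1)] e(2) m carr by blast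
    moreover have "x \<ominus> x' = (w \<ominus> x') \<otimes> e" unfolding x_def using carr e(1) by algebra
    ultimately show ?thesis using a_rcosets_mem_iff[OF Jm bspec[OF x'(2) m] x] by simp
  qed
  moreover have "x \<in> Z m0"
  proof -
    have J0: "ideal (J m0) R" "Z m0 \<in> a_rcosets (J m0)" using insert.prems(1,3) by blast+
    have "(x' \<ominus> w) \<otimes> (\<one> \<ominus> e) \<in> J m0" using ideal.I_l_closed[OF J0(1) e(3)] carr by simp
    moreover have "x \<ominus> w = (x' \<ominus> w) \<otimes> (\<one> \<ominus> e)" unfolding x_def using carr e(1) by algebra
    ultimately show ?thesis using a_rcosets_mem_iff[OF J0 w(2) x] by simp
  qed
  ultimately show ?case by blast
qed

lemma (in ring) carrier_subset_generate_ring_set_add: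
  assumes J: "ideal J R" and H: "H \<subseteq> carrier R"
    and gen: "generate_ring (R Quot J) ((+>) J ` H) = carrier (R Quot J)"
  shows "carrier R \<subseteq> generate_ring R H <+> J"
proof
  fix b assume b: "b \<in> carrier R"
  interpret J: ideal J R by (rule J)
  let ?G = "generate_ring R H"
  have G: "subring ?G R" by (rule generate_ring_is_subring[OF H])
  have img: "subring ((+>) J ` ?G) (R Quot J)"
    by (rule ring_hom_ring.img_is_subring[OF J.rcos_ring_hom_ring G])
  have HG: "(+>) J ` H \<subseteq> (+>) J ` ?G" using generate_ring.incl by (rule image_mono[OF subsetI])
  have "generate_ring (R Quot J) ((+>) J ` H) \<subseteq> (+>) J ` ?G"
    using HG subringE(1)[OF img] by (intro ring.generate_ring_min_subring1[OF J.quotient_is_ring _ img]) auto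
  then have "carrier (R Quot J) \<subseteq> (+>) J ` ?G" using gen by simp
  moreover have "J +> b \<in> carrier (R Quot J)" by (simp add: FactRing_def a_rcosetsI[OF J.a_subset b])
  ultimately obtain r where r: "r \<in> ?G" "J +> b = J +> r" by blast
  have "r \<in> carrier R" using r(1) generate_ring_incl[OF H] by blast
  then have "b \<ominus> r \<in> J" "b = r \<oplus> (b \<ominus> r)"
    using quotient_eq_iff_same_a_r_cos[OF J b] r(2) b by (simp, algebra)
  thus "b \<in> ?G <+> J" using r(1) unfolding set_add_def' by blast
qed

section \<open>Linear combinations and Nakayama's lemma\<close>

locale comm_algebra = cring B for B :: "('b, 'n) ring_scheme" (structure) +
  fixes A :: "('a, 'm) ring_scheme" and phi :: "'a \<Rightarrow> 'b"
  assumes cring_A: "cring A" and phi_hom: "phi \<in> ring_hom A B"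
begin

sublocale A: cring A by (rule cring_A)

sublocale phi: ring_hom_cring A B phi
  by (intro ring_hom_cring.intro ring_hom_cring_axioms.intro cring_A is_cring phi_hom)

definition lincomb :: "('b \<Rightarrow> 'a) \<Rightarrow> 'b set \<Rightarrow> 'b" where
  "lincomb c T = (\<Oplus>s\<in>T. phi (c s) \<otimes> s)"

definition lincombs :: "'a set \<Rightarrow> 'b set \<Rightarrow> 'b set" where
  "lincombs K T = {lincomb c T | c. c \<in> T \<rightarrow> K}"

lemma lincomb_closed [simp]: "T \<subseteq> carrier B \<Longrightarrow> c \<in> T \<rightarrow> carrier A \<Longrightarrow> lincomb c T \<in> carrier B"
  unfolding lincomb_def by (intro finsum_closed) (auto simp: Pi_def subset_iff)

lemma lincomb_insert:
  "\<lbrakk>finite T; s \<notin> T; insert s T \<subseteq> carrier B; c \<in> insert s T \<rightarrow> carrier A\<rbrakk>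
    \<Longrightarrow> lincomb c (insert s T) = phi (c s) \<otimes> s \<oplus> lincomb c T"
  unfolding lincomb_def by (subst finsum_insert) (auto simp: Pi_def subset_iff)

lemma lincomb_add:
  "\<lbrakk>T \<subseteq> carrier B; c \<in> T \<rightarrow> carrier A; c' \<in> T \<rightarrow> carrier A\<rbrakk>
    \<Longrightarrow> lincomb c T \<oplus> lincomb c' T = lincomb (\<lambda>s. c s \<oplus>\<^bsub>A\<^esub> c' s) T"
proof -
  assume T: "T \<subseteq> carrier B" and c: "c \<in> T \<rightarrow> carrier A" and c': "c' \<in> T \<rightarrow> carrier A"
  have "lincomb c T \<oplus> lincomb c' T = (\<Oplus>s\<in>T. phi (c s) \<otimes> s \<oplus> phi (c' s) \<otimes> s)"
    unfolding lincomb_def using T c c' by (intro finsum_addf[symmetric]) (auto simp: Pi_def subset_iff)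
  also have "\<dots> = lincomb (\<lambda>s. c s \<oplus>\<^bsub>A\<^esub> c' s) T"
    unfolding lincomb_def using T c c' by (intro finsum_cong') (auto simp: Pi_def subset_iff l_distr)
  finally show ?thesis .
qed

lemma lincomb_smult:
  "\<lbrakk>finite T; T \<subseteq> carrier B; a \<in> carrier A; c \<in> T \<rightarrow> carrier A\<rbrakk>
    \<Longrightarrow> phi a \<otimes> lincomb c T = lincomb (\<lambda>s. a \<otimes>\<^bsub>A\<^esub> c s) T"
  unfolding lincomb_def
  by (subst finsum_rdistr) (auto intro!: finsum_cong' simp: m_assoc Pi_def subset_iff)

lemma lincomb_zero: "T \<subseteq> carrier B \<Longrightarrow> lincomb (\<lambda>_. \<zero>\<^bsub>A\<^esub>) T = \<zero>"
  unfolding lincomb_def by (rule trans[OF finsum_cong' finsum_zero]) (auto simp: subset_iff)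

lemma lincombs_carrier:
  assumes "T \<subseteq> carrier B" "K \<subseteq> carrier A"
  shows "lincombs K T \<subseteq> carrier B"
proof
  fix v assume "v \<in> lincombs K T"
  then obtain c where "c \<in> T \<rightarrow> K" "v = lincomb c T" unfolding lincombs_def by blast
  thus "v \<in> carrier B" using assms lincomb_closed Pi_mono[of T "\<lambda>_. K" "\<lambda>_. carrier A"] by blast
qed

lemma lincombs_empty [simp]: "lincombs K {} = {\<zero>}"
  unfolding lincombs_def lincomb_def by auto

context
  fixes T assumes T: "finite T" "T \<subseteq> carrier B"
begin

lemma zero_in_lincombs: "\<zero>\<^bsub>A\<^esub> \<in> K \<Longrightarrow> \<zero> \<in> lincombs K T"
  unfolding lincombs_def using lincomb_zero[OF T(2)] by force

lemma lincombs_add: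
  assumes K: "ideal K A" and "u \<in> lincombs K T" "v \<in> lincombs K T"
  shows "u \<oplus> v \<in> lincombs K T"
proof -
  interpret K: ideal K A by (rule K)
  obtain c c' where c: "c \<in> T \<rightarrow> K" "u = lincomb c T" and c': "c' \<in> T \<rightarrow> K" "v = lincomb c' T"
    using assms(2,3) unfolding lincombs_def by blast
  have "u \<oplus> v = lincomb (\<lambda>s. c s \<oplus>\<^bsub>A\<^esub> c' s) T"
    unfolding c c' using c c' K.Icarr T(2) by (intro lincomb_add) blast+
  moreover have "(\<lambda>s. c s \<oplus>\<^bsub>A\<^esub> c' s) \<in> T \<rightarrow> K" using c c' K.a_closed by blast
  ultimately show ?thesis unfolding lincombs_def by blast
qed

lemma lincombs_smult:
  assumes a: "a \<in> carrier A" and v: "v \<in> lincombs K' T" and K': "K' \<subseteq> carrier A"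
    and aK: "\<And>k. k \<in> K' \<Longrightarrow> a \<otimes>\<^bsub>A\<^esub> k \<in> K"
  shows "phi a \<otimes> v \<in> lincombs K T"
proof -
  obtain c where c: "c \<in> T \<rightarrow> K'" "v = lincomb c T" using v unfolding lincombs_def by blast
  have "phi a \<otimes> v = lincomb (\<lambda>s. a \<otimes>\<^bsub>A\<^esub> c s) T"
    unfolding c using c K' T a by (intro lincomb_smult) blast+
  moreover have "(\<lambda>s. a \<otimes>\<^bsub>A\<^esub> c s) \<in> T \<rightarrow> K" using c aK by blast
  ultimately show ?thesis unfolding lincombs_def by blast
qed

lemma lincombs_finsum:
  assumes K: "ideal K A"
  shows "finite F \<Longrightarrow> f \<in> F \<rightarrow> lincombs K T \<Longrightarrow> finsum B f F \<in> lincombs K T"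
proof (induction F rule: finite_induct)
  case empty
  show ?case using zero_in_lincombs[OF additive_subgroup.zero_closed[OF ideal.axioms(1)[OF K]]] by simp
next
  case (insert x F)
  have "f \<in> insert x F \<rightarrow> carrier B"
    using insert.prems lincombs_carrier[OF T(2) additive_subgroup.a_subset[OF ideal.axioms(1)[OF K]]]
    by blast
  then have "finsum B f (insert x F) = f x \<oplus> finsum B f F"
    using finsum_insert[OF insert.hyps(1,2)] by blast
  thus ?case using lincombs_add[OF K] insert by simp
qed

end

definition is_submodule :: "'b set \<Rightarrow> bool" where
  "is_submodule N \<longleftrightarrow> additive_subgroup N B \<and> (\<forall>a\<in>carrier A. \<forall>n\<in>N. phi a \<otimes> n \<in> N)"

lemma submoduleD:
  assumes "is_submodule N"
  shows submodule_carrier: "N \<subseteq> carrier B"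
    and submodule_zero: "\<zero> \<in> N"
    and submodule_add: "\<lbrakk>m \<in> N; n \<in> N\<rbrakk> \<Longrightarrow> m \<oplus> n \<in> N"
    and submodule_smult: "\<lbrakk>a \<in> carrier A; n \<in> N\<rbrakk> \<Longrightarrow> phi a \<otimes> n \<in> N"
proof -
  interpret N: additive_subgroup N B using assms unfolding is_submodule_def by blast
  show "N \<subseteq> carrier B" "\<zero> \<in> N" by (rule N.a_subset, rule N.zero_closed)
  show "\<lbrakk>m \<in> N; n \<in> N\<rbrakk> \<Longrightarrow> m \<oplus> n \<in> N" by (rule N.a_closed)
  show "\<lbrakk>a \<in> carrier A; n \<in> N\<rbrakk> \<Longrightarrow> phi a \<otimes> n \<in> N" using assms unfolding is_submodule_def by blast
qed

lemma subring_is_submodule: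
  assumes R: "subring R B" and "phi ` carrier A \<subseteq> R"
  shows "is_submodule R"
  unfolding is_submodule_def
  using additive_subgroup.intro[OF subring.axioms(1)[OF R]] subringE(6)[OF R] assms(2) by blast

lemma mem_set_add_lincombs_iff:
  "x \<in> N <+> lincombs K T \<longleftrightarrow> (\<exists>n\<in>N. \<exists>c\<in>T \<rightarrow> K. x = n \<oplus> lincomb c T)"
  unfolding mem_set_add_iff lincombs_def by blast

lemma carrier_subset_set_add_lincombs_Int:
  assumes N: "is_submodule N" and T: "finite T" "T \<subseteq> carrier B"
    and K: "ideal K A" and L: "ideal L A" and e: "e \<in> K" "\<one>\<^bsub>A\<^esub> \<ominus>\<^bsub>A\<^esub> e \<in> L"
    and NK: "carrier B \<subseteq> N <+> lincombs K T" and NL: "carrier B \<subseteq> N <+> lincombs L T"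
  shows "carrier B \<subseteq> N <+> lincombs (K \<inter> L) T"
proof
  interpret K: ideal K A by (rule K)
  interpret L: ideal L A by (rule L)
  fix b assume b: "b \<in> carrier B"
  obtain n1 c1 where n1: "n1 \<in> N" and c1: "c1 \<in> T \<rightarrow> K" "b = n1 \<oplus> lincomb c1 T"
    using subsetD[OF NK b] unfolding mem_set_add_lincombs_iff by blast
  obtain n2 c2 where n2: "n2 \<in> N" and c2: "c2 \<in> T \<rightarrow> L" "b = n2 \<oplus> lincomb c2 T"
    using subsetD[OF NL b] unfolding mem_set_add_lincombs_iff by blast
  \<comment> \<open>Expand \<open>b = phi f \<otimes> b \<oplus> phi e \<otimes> b\<close> with the first representation in the first summand
    and the second one in the second summand.\<close>
  define f where "f = \<one>\<^bsub>A\<^esub> \<ominus>\<^bsub>A\<^esub> e"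
  have eA: "e \<in> carrier A" and fA: "f \<in> carrier A" and fL: "f \<in> L"
    using K.Icarr[OF e(1)] e(2) unfolding f_def by auto
  have c1A: "c1 \<in> T \<rightarrow> carrier A" and c2A: "c2 \<in> T \<rightarrow> carrier A"
    using c1(1) c2(1) K.Icarr L.Icarr by blast+
  define c where "c s = f \<otimes>\<^bsub>A\<^esub> c1 s \<oplus>\<^bsub>A\<^esub> e \<otimes>\<^bsub>A\<^esub> c2 s" for s
  have c: "c \<in> T \<rightarrow> K \<inter> L"
  proof
    fix s assume s: "s \<in> T"
    have "f \<otimes>\<^bsub>A\<^esub> c1 s \<in> K \<inter> L"
      using K.I_l_closed[OF _ fA] L.I_r_closed[OF fL] c1(1) c1A s by blast
    moreover have "e \<otimes>\<^bsub>A\<^esub> c2 s \<in> K \<inter> L"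
      using K.I_r_closed[OF e(1)] L.I_l_closed[OF _ eA] c2(1) c2A s by blast
    ultimately show "c s \<in> K \<inter> L" unfolding c_def using K.a_closed L.a_closed by blast
  qed
  have n: "phi f \<otimes> n1 \<oplus> phi e \<otimes> n2 \<in> N"
    using submodule_add[OF N submodule_smult[OF N fA n1] submodule_smult[OF N eA n2]] .
  have carr: "n1 \<in> carrier B" "n2 \<in> carrier B" "lincomb c1 T \<in> carrier B" "lincomb c2 T \<in> carrier B"
    using n1 n2 submodule_carrier[OF N] c1A c2A T(2) by auto
  have "lincomb c T = lincomb (\<lambda>s. f \<otimes>\<^bsub>A\<^esub> c1 s) T \<oplus> lincomb (\<lambda>s. e \<otimes>\<^bsub>A\<^esub> c2 s) T"
    unfolding c_def using c1A c2A eA fA T(2) by (intro lincomb_add[symmetric]) auto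
  also have "\<dots> = phi f \<otimes> lincomb c1 T \<oplus> phi e \<otimes> lincomb c2 T"
    using lincomb_smult[OF T fA c1A] lincomb_smult[OF T eA c2A] by simp
  finally have lc: "lincomb c T = phi f \<otimes> lincomb c1 T \<oplus> phi e \<otimes> lincomb c2 T" .
  have one: "phi f \<oplus> phi e = \<one>"
  proof -
    have "phi f = \<one> \<ominus> phi e" unfolding f_def using eA by simp
    thus ?thesis using phi.hom_closed[OF eA] by algebra
  qed
  have "(phi f \<otimes> n1 \<oplus> phi e \<otimes> n2) \<oplus> lincomb c T
      = phi f \<otimes> (n1 \<oplus> lincomb c1 T) \<oplus> phi e \<otimes> (n2 \<oplus> lincomb c2 T)"
    unfolding lc using carr phi.hom_closed[OF fA] phi.hom_closed[OF eA] by algebra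
  also have "\<dots> = (phi f \<oplus> phi e) \<otimes> b" using c1(2) c2(2) fA eA b by (simp add: l_distr)
  also have "\<dots> = b" using one b by simp
  finally have "b = (phi f \<otimes> n1 \<oplus> phi e \<otimes> n2) \<oplus> lincomb c T" by simp
  thus "b \<in> N <+> lincombs (K \<inter> L) T" using n c unfolding mem_set_add_lincombs_iff by blast
qed

lemma set_add_lincombs_insert_subset:
  assumes N: "is_submodule N" and K: "ideal K A"
    and T: "finite T" "s \<notin> T" "insert s T \<subseteq> carrier B"
    and s: "s \<in> N <+> lincombs K T"
  shows "N <+> lincombs K (insert s T) \<subseteq> N <+> lincombs K T"
proof
  interpret K: ideal K A by (rule K)
  fix x assume "x \<in> N <+> lincombs K (insert s T)"
  then obtain n c where n: "n \<in> N" and c: "c \<in> insert s T \<rightarrow> K" "x = n \<oplus> lincomb c (insert s T)"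
    unfolding mem_set_add_lincombs_iff by blast
  obtain n0 c0 where n0: "n0 \<in> N" and c0: "c0 \<in> T \<rightarrow> K" "s = n0 \<oplus> lincomb c0 T"
    using s unfolding mem_set_add_lincombs_iff by blast
  have TB: "T \<subseteq> carrier B" using T(3) by blast
  have cA: "c \<in> insert s T \<rightarrow> carrier A" and c0A: "c0 \<in> T \<rightarrow> carrier A"
    using c(1) c0(1) K.Icarr by blast+
  then have csA: "c s \<in> carrier A" and cTA: "c \<in> T \<rightarrow> carrier A" by auto
  have csc0: "(\<lambda>t. c s \<otimes>\<^bsub>A\<^esub> c0 t) \<in> T \<rightarrow> carrier A" using csA c0A by auto
  have carr: "n \<in> carrier B" "n0 \<in> carrier B" "phi (c s) \<in> carrier B"
    "lincomb c T \<in> carrier B" "lincomb c0 T \<in> carrier B"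
    using n n0 submodule_carrier[OF N] csA cTA c0A TB by auto
  define c' where "c' t = c t \<oplus>\<^bsub>A\<^esub> c s \<otimes>\<^bsub>A\<^esub> c0 t" for t
  have "x = n \<oplus> (phi (c s) \<otimes> (n0 \<oplus> lincomb c0 T) \<oplus> lincomb c T)"
    using c(2) lincomb_insert[OF T cA] c0(2) by simp
  also have "\<dots> = (n \<oplus> phi (c s) \<otimes> n0) \<oplus> (lincomb c T \<oplus> phi (c s) \<otimes> lincomb c0 T)"
    using carr by algebra
  also have "lincomb c T \<oplus> phi (c s) \<otimes> lincomb c0 T = lincomb c' T"
    unfolding c'_def lincomb_smult[OF T(1) TB csA c0A] by (rule lincomb_add[OF TB cTA csc0])
  finally have "x = (n \<oplus> phi (c s) \<otimes> n0) \<oplus> lincomb c' T" .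
  moreover have "n \<oplus> phi (c s) \<otimes> n0 \<in> N"
    using submodule_add[OF N n submodule_smult[OF N csA n0]] .
  moreover have "c' \<in> T \<rightarrow> K"
    unfolding c'_def using c(1) c0(1) csA K.a_closed K.I_l_closed by (auto simp: Pi_def)
  ultimately show "x \<in> N <+> lincombs K T" unfolding mem_set_add_lincombs_iff by blast
qed

lemma jacobson_lincombs_insert_remove:
  assumes N: "is_submodule N" and T: "finite T" "s \<notin> T" "insert s T \<subseteq> carrier B"
    and s: "s \<in> N <+> lincombs (jacobson A) (insert s T)"
  shows "s \<in> N <+> lincombs (jacobson A) T"
proof -
  interpret J: ideal "jacobson A" A by (rule A.ideal_jacobson)
  obtain n0 c0 where n0: "n0 \<in> N" and c0: "c0 \<in> insert s T \<rightarrow> jacobson A"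
      "s = n0 \<oplus> lincomb c0 (insert s T)"
    using s unfolding mem_set_add_lincombs_iff by blast
  have TB: "T \<subseteq> carrier B" and sB: "s \<in> carrier B" using T(3) by blast+
  have c0A: "c0 \<in> insert s T \<rightarrow> carrier A" using c0(1) J.Icarr by blast
  then have c0sA: "c0 s \<in> carrier A" and c0TA: "c0 \<in> T \<rightarrow> carrier A" by blast+
  \<comment> \<open>\<open>phi u \<otimes> s\<close> lies in \<open>N <+> lincombs (jacobson A) T\<close> and \<open>u\<close> is a unit.\<close>
  define u where "u = \<one>\<^bsub>A\<^esub> \<ominus>\<^bsub>A\<^esub> c0 s"
  define v where "v = inv\<^bsub>A\<^esub> u"
  have "u \<in> Units A" unfolding u_def using c0(1) by (intro A.jacobson_one_minus_Units) blast
  then have uA: "u \<in> carrier A" and v_A: "v \<in> carrier A" and v_inv: "v \<otimes>\<^bsub>A\<^esub> u = \<one>\<^bsub>A\<^esub>"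
    unfolding v_def by (rule A.Units_closed, rule A.Units_inv_closed, rule A.Units_l_inv)
  have carr: "n0 \<in> carrier B" "lincomb c0 T \<in> carrier B" "phi (c0 s) \<in> carrier B" "phi v \<in> carrier B"
    using n0 submodule_carrier[OF N] TB c0TA c0sA v_A by auto
  have s_eq: "s = n0 \<oplus> (phi (c0 s) \<otimes> s \<oplus> lincomb c0 T)"
    using c0(2) lincomb_insert[OF T c0A] by simp
  have "phi u = \<one> \<ominus> phi (c0 s)" unfolding u_def using c0sA by simp
  then have "phi u \<otimes> s = s \<ominus> phi (c0 s) \<otimes> s" using carr sB by algebra
  also have "\<dots> = (n0 \<oplus> (phi (c0 s) \<otimes> s \<oplus> lincomb c0 T)) \<ominus> phi (c0 s) \<otimes> s"
    by (subst (1) s_eq) (rule refl)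
  also have "\<dots> = n0 \<oplus> lincomb c0 T" using carr sB by algebra
  finally have us: "phi u \<otimes> s = n0 \<oplus> lincomb c0 T" .
  have "phi v \<otimes> phi u = \<one>" using phi.hom_mult[OF v_A uA] v_inv by simp
  then have "s = phi v \<otimes> (phi u \<otimes> s)" using sB uA v_A by (simp flip: m_assoc)
  also have "\<dots> = phi v \<otimes> n0 \<oplus> lincomb (\<lambda>t. v \<otimes>\<^bsub>A\<^esub> c0 t) T"
    unfolding us using carr lincomb_smult[OF T(1) TB v_A c0TA] by (simp add: r_distr)
  finally have "s = phi v \<otimes> n0 \<oplus> lincomb (\<lambda>t. v \<otimes>\<^bsub>A\<^esub> c0 t) T" .
  moreover have "(\<lambda>t. v \<otimes>\<^bsub>A\<^esub> c0 t) \<in> T \<rightarrow> jacobson A"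
    using c0(1) J.I_l_closed[OF _ v_A] by blast
  ultimately show ?thesis
    using submodule_smult[OF N v_A n0] unfolding mem_set_add_lincombs_iff by blast
qed

theorem nakayama:
  assumes N: "is_submodule N" and "finite T" "T \<subseteq> carrier B"
    and "carrier B \<subseteq> N <+> lincombs (jacobson A) T"
  shows "carrier B \<subseteq> N"
  using assms(2-4)
proof (induction T rule: finite_induct)
  case empty
  show ?case
  proof
    fix b assume "b \<in> carrier B"
    with empty.prems(2) have "b \<in> N <+> lincombs (jacobson A) {}" by (rule subsetD)
    then obtain n where n: "n \<in> N" "b = n \<oplus> \<zero>" unfolding lincombs_empty mem_set_add_iff by blast
    have "n \<in> carrier B" using n(1) submodule_carrier[OF N] by blast
    thus "b \<in> N" using n by simp
  qed
next
  case (insert s T)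
  have sB: "s \<in> carrier B" and TB: "T \<subseteq> carrier B" using insert.prems(1) by simp_all
  have "s \<in> N <+> lincombs (jacobson A) T"
    using jacobson_lincombs_insert_remove[OF N insert.hyps(1,2) insert.prems(1)]
      subsetD[OF insert.prems(2) sB] .
  then have "N <+> lincombs (jacobson A) (insert s T) \<subseteq> N <+> lincombs (jacobson A) T"
    by (rule set_add_lincombs_insert_subset[OF N A.ideal_jacobson insert.hyps(1,2) insert.prems(1)])
  with insert.prems(2) have "carrier B \<subseteq> N <+> lincombs (jacobson A) T" by (rule subset_trans)
  thus ?case by (rule insert.IH[OF TB])
qed

section \<open>Extended ideals and fibres\<close>

lemma hom_image_ideal_subset: "ideal K A \<Longrightarrow> phi ` K \<subseteq> carrier B"
  by (intro image_subsetI phi.hom_closed) (rule ideal.Icarr)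

lemma ideal_ext_ideal: "ideal K A \<Longrightarrow> ideal (ext_ideal B phi K) B"
  unfolding ext_ideal_def by (rule genideal_ideal[OF hom_image_ideal_subset])

lemma hom_in_ext_ideal: "ideal K A \<Longrightarrow> a \<in> K \<Longrightarrow> phi a \<in> ext_ideal B phi K"
  unfolding ext_ideal_def by (rule subsetD[OF genideal_self[OF hom_image_ideal_subset] imageI])

lemma ext_ideals_comaximal:
  assumes m: "maximalideal m A" and m': "maximalideal m' A" and "m \<noteq> m'"
  shows "\<exists>q\<in>ext_ideal B phi m'. \<one> \<ominus> q \<in> ext_ideal B phi m"
proof -
  obtain q where q: "q \<in> m'" "\<one>\<^bsub>A\<^esub> \<ominus>\<^bsub>A\<^esub> q \<in> m"
    using A.maximalideals_comaximal[OF assms] by blast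
  have "q \<in> carrier A" using ideal.Icarr[OF maximalideal.axioms(1)[OF m'] q(1)] .
  moreover have "phi (\<one>\<^bsub>A\<^esub> \<ominus>\<^bsub>A\<^esub> q) \<in> ext_ideal B phi m"
    by (rule hom_in_ext_ideal[OF maximalideal.axioms(1)[OF m] q(2)])
  ultimately have "\<one> \<ominus> phi q \<in> ext_ideal B phi m" by simp
  moreover have "phi q \<in> ext_ideal B phi m'"
    by (rule hom_in_ext_ideal[OF maximalideal.axioms(1)[OF m'] q(1)])
  ultimately show ?thesis by blast
qed

lemma carrier_subset_generate_ring_set_add_quotient:
  assumes J: "ideal J B" and x: "\<And>i. i < d \<Longrightarrow> x i \<in> carrier B"
    and xz: "\<And>i. i < d \<Longrightarrow> J +> x i = z i"
    and gen: "generates_algebra A (B Quot J) (\<lambda>a. J +> phi a) d z"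
  shows "carrier B \<subseteq> generate_ring B (phi ` carrier A \<union> x ` {..<d}) <+> J"
proof (rule carrier_subset_generate_ring_set_add[OF J])
  show "phi ` carrier A \<union> x ` {..<d} \<subseteq> carrier B" using x by auto
  have "(\<lambda>i. J +> x i) ` {..<d} = z ` {..<d}" using xz by (intro image_cong) simp_all
  then have "(+>) J ` (phi ` carrier A \<union> x ` {..<d}) = (\<lambda>a. J +> phi a) ` carrier A \<union> z ` {..<d}"
    by (simp only: image_Un image_image)
  thus "generate_ring (B Quot J) ((+>) J ` (phi ` carrier A \<union> x ` {..<d})) = carrier (B Quot J)"
    using gen unfolding generates_algebra_def by simp
qed

lemma exists_lift_to_fibres:
  assumes fin: "finite {m. maximalideal m A}" and I: "ideal I B"
    and Y: "Y \<in> carrier (B Quot I)"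
    and Z: "\<And>m. maximalideal m A \<Longrightarrow> Z m \<in> carrier (B Quot ext_ideal B phi m)"
    and compat: "\<And>m. maximalideal m A \<Longrightarrow> \<exists>u\<in>Y. \<exists>v\<in>Z m. u \<ominus> v \<in> I <+> ext_ideal B phi m"
  shows "\<exists>x. x \<in> carrier B \<and> I +> x = Y \<and> (\<forall>m. maximalideal m A \<longrightarrow> ext_ideal B phi m +> x = Z m)"
proof -
  interpret I: ideal I B by (rule I)
  define M where "M = {m. maximalideal m A}"
  have J: "ideal (ext_ideal B phi m) B" if "m \<in> M" for m
    using that unfolding M_def by (intro ideal_ext_ideal maximalideal.axioms(1)) simp
  have Y': "Y \<in> a_rcosets I" using Y by (simp add: FactRing_def)
  have Z': "Z m \<in> a_rcosets (ext_ideal B phi m)" if "m \<in> M" for m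
    using Z[of m] that unfolding M_def by (simp add: FactRing_def)
  have comax: "\<exists>q\<in>ext_ideal B phi m. \<one> \<ominus> q \<in> ext_ideal B phi m'"
    if "m \<in> M" "m' \<in> M" "m \<noteq> m'" for m m'
  proof (rule ext_ideals_comaximal)
    show "maximalideal m' A" "maximalideal m A" using that(1,2) unfolding M_def by simp_all
    show "m' \<noteq> m" using that(3) by simp
  qed
  have meet: "Y \<inter> Z m \<noteq> {}" if m: "m \<in> M" for m
  proof -
    have "maximalideal m A" using m unfolding M_def by simp
    from compat[OF this] obtain u where u: "u \<in> Y" and v: "\<exists>v\<in>Z m. u \<ominus> v \<in> I <+> ext_ideal B phi m" ..
    from v obtain v where "v \<in> Z m" and "u \<ominus> v \<in> I <+> ext_ideal B phi m" ..
    with u show ?thesis by (rule a_rcosets_meet[OF I J[OF m] Y' Z'[OF m]])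
  qed
  have "finite M" using fin unfolding M_def .
  then have "\<exists>x. x \<in> Y \<and> (\<forall>m\<in>M. x \<in> Z m)"
    by (rule chinese_remainder_a_rcosets[OF I _ J comax Y' Z' meet])
  then obtain x where x: "x \<in> Y" "\<forall>m\<in>M. x \<in> Z m" by (elim exE conjE)
  have "x \<in> carrier B" using x(1) I.a_rcosets_carrier[OF Y'] by blast
  moreover have "I +> x = Y" using a_rcosets_eq_a_r_coset[OF I Y' x(1)] by simp
  moreover have "ext_ideal B phi m +> x = Z m" if "maximalideal m A" for m
  proof -
    have m: "m \<in> M" unfolding M_def using that by simp
    show ?thesis using a_rcosets_eq_a_r_coset[OF J[OF m] Z'[OF m] bspec[OF x(2) m]] by simp
  qed
  ultimately show ?thesis by blast
qed

end

locale finite_comm_algebra = comm_algebra +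
  fixes S assumes finite_S: "finite S" and S_carrier: "S \<subseteq> carrier B"
    and S_spans: "\<And>b. b \<in> carrier B \<Longrightarrow> \<exists>c\<in>S \<rightarrow> carrier A. b = (\<Oplus>s\<in>S. phi (c s) \<otimes> s)"
begin

lemma carrier_subset_lincombs: "carrier B \<subseteq> lincombs (carrier A) S"
  using S_spans unfolding lincombs_def lincomb_def by blast

lemma ideal_lincombs:
  assumes K: "ideal K A"
  shows "ideal (lincombs K S) B"
proof -
  interpret K: ideal K A by (rule K)
  note S = finite_S S_carrier
  have sub: "lincombs K S \<subseteq> carrier B" by (rule lincombs_carrier[OF S_carrier K.a_subset])
  have neg: "\<ominus> v \<in> lincombs K S" if v: "v \<in> lincombs K S" for v
  proof -
    have "phi (\<ominus>\<^bsub>A\<^esub> \<one>\<^bsub>A\<^esub>) \<otimes> v \<in> lincombs K S"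
      using v K.a_subset by (intro lincombs_smult[OF S]) (auto intro: K.I_l_closed)
    moreover have "v \<in> carrier B" using v sub by blast
    ultimately show ?thesis by (simp add: l_minus)
  qed
  have mult: "b \<otimes> v \<in> lincombs K S" if b: "b \<in> carrier B" and v: "v \<in> lincombs K S" for b v
  proof -
    obtain c where c: "c \<in> S \<rightarrow> K" "v = lincomb c S" using v unfolding lincombs_def by blast
    have cA: "c \<in> S \<rightarrow> carrier A" using c(1) K.Icarr by blast
    have "b \<otimes> v = (\<Oplus>s\<in>S. phi (c s) \<otimes> (b \<otimes> s))"
      unfolding c lincomb_def using cA S_carrier b
      by (subst finsum_rdistr[OF finite_S b]) (auto intro!: finsum_cong' simp: m_lcomm Pi_def subset_iff)
    also have "\<dots> \<in> lincombs K S"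
    proof (rule lincombs_finsum[OF S K finite_S], rule Pi_I)
      fix s assume s: "s \<in> S"
      have bs: "b \<otimes> s \<in> lincombs (carrier A) S" using carrier_subset_lincombs b s S_carrier by blast
      have cs: "c s \<in> K" using c(1) s by blast
      show "phi (c s) \<otimes> (b \<otimes> s) \<in> lincombs K S"
        by (rule lincombs_smult[OF S K.Icarr[OF cs] bs subset_refl K.I_r_closed[OF cs]])
    qed
    finally show ?thesis .
  qed
  show ?thesis
  proof (rule idealI)
    show "subgroup (lincombs K S) (add_monoid B)"
      using sub zero_in_lincombs[OF S K.zero_closed] lincombs_add[OF S K] neg
      by (intro add.subgroupI) (auto simp: a_inv_def[symmetric])
    show "b \<otimes> v \<in> lincombs K S" "v \<otimes> b \<in> lincombs K S"
      if "v \<in> lincombs K S" "b \<in> carrier B" for v b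
      using mult[OF that(2,1)] m_comm[OF that(2)] sub that(1) by auto
  qed (rule ring_axioms)
qed

lemma ext_ideal_subset_lincombs:
  assumes K: "ideal K A"
  shows "ext_ideal B phi K \<subseteq> lincombs K S"
  unfolding ext_ideal_def
proof (rule genideal_minimal[OF ideal_lincombs[OF K]], rule image_subsetI)
  fix a assume a: "a \<in> K"
  have "\<one> \<in> lincombs (carrier A) S" using carrier_subset_lincombs by blast
  then have "phi a \<otimes> \<one> \<in> lincombs K S"
    using a ideal.Icarr[OF K a]
    by (intro lincombs_smult[OF finite_S S_carrier]) (auto intro: ideal.I_r_closed[OF K])
  thus "phi a \<in> lincombs K S" using ideal.Icarr[OF K a] by simp
qed

lemma carrier_subset_set_add_lincombs_jacobson:
  assumes N: "is_submodule N" and fin: "finite {m. maximalideal m A}"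
    and cover: "\<And>m. maximalideal m A \<Longrightarrow> carrier B \<subseteq> N <+> ext_ideal B phi m"
  shows "carrier B \<subseteq> N <+> lincombs (jacobson A) S"
proof -
  have "carrier B \<subseteq> N <+> lincombs (carrier A \<inter> \<Inter>F) S"
    if "finite F" "F \<subseteq> {m. maximalideal m A}" for F
    using that
  proof (induction F rule: finite_induct)
    case empty
    show ?case
    proof
      fix b assume "b \<in> carrier B"
      then have "b \<in> lincombs (carrier A) S" "b = \<zero> \<oplus> b"
        using subsetD[OF carrier_subset_lincombs] by simp_all
      thus "b \<in> N <+> lincombs (carrier A \<inter> \<Inter>{}) S"
        using submodule_zero[OF N] unfolding mem_set_add_iff Inter_empty Int_UNIV_right by blast
    qed
  next
    case (insert m0 F)
    have m0: "maximalideal m0 A" and F: "F \<subseteq> {m. maximalideal m A}" using insert.prems by simp_all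
    have m0_ideal: "ideal m0 A" by (rule maximalideal.axioms(1)[OF m0])
    have F_ideal: "ideal m A" if "m \<in> F" for m using F that maximalideal.axioms(1) by blast
    have "\<exists>q\<in>m. \<one>\<^bsub>A\<^esub> \<ominus>\<^bsub>A\<^esub> q \<in> m0" if "m \<in> F" for m
    proof (rule A.maximalideals_comaximal[OF m0])
      show "maximalideal m A" using F that by blast
      show "m0 \<noteq> m" using insert.hyps(2) that by blast
    qed
    then obtain e where e: "e \<in> carrier A" "\<forall>m\<in>F. e \<in> m" "\<one>\<^bsub>A\<^esub> \<ominus>\<^bsub>A\<^esub> e \<in> m0"
      using A.exists_separating_element[of F "\<lambda>m. m", OF insert.hyps(1) m0_ideal F_ideal] by blast
    have "N <+> ext_ideal B phi m0 \<subseteq> N <+> lincombs m0 S"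
      unfolding set_add_def by (rule mono_set_mult[OF subset_refl ext_ideal_subset_lincombs[OF m0_ideal]])
    with cover[OF m0] have "carrier B \<subseteq> N <+> lincombs m0 S" by (rule subset_trans)
    moreover have "e \<in> carrier A \<inter> \<Inter>F" using e(1,2) by blast
    ultimately have "carrier B \<subseteq> N <+> lincombs ((carrier A \<inter> \<Inter>F) \<inter> m0) S"
      using carrier_subset_set_add_lincombs_Int[OF N finite_S S_carrier A.ideal_carrier_Int_Inter[OF F_ideal] m0_ideal
          _ e(3) insert.IH[OF F]] by blast
    moreover have "(carrier A \<inter> \<Inter>F) \<inter> m0 = carrier A \<inter> \<Inter>(insert m0 F)" by blast
    ultimately show ?case by simp
  qed
  from this[OF fin subset_refl] show ?thesis unfolding jacobson_def .
qed

lemma generates_algebra_if_generates_fibres: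
  assumes fin: "finite {m. maximalideal m A}" and x: "\<And>i. i < d \<Longrightarrow> x i \<in> carrier B"
    and gen: "\<And>m. maximalideal m A \<Longrightarrow>
      generates_algebra A (B Quot ext_ideal B phi m) (\<lambda>a. ext_ideal B phi m +> phi a) d (z m)"
    and xz: "\<And>m i. maximalideal m A \<Longrightarrow> i < d \<Longrightarrow> ext_ideal B phi m +> x i = z m i"
  shows "generates_algebra A B phi d x"
proof -
  define R where "R = generate_ring B (phi ` carrier A \<union> x ` {..<d})"
  have H: "phi ` carrier A \<union> x ` {..<d} \<subseteq> carrier B" using x by (auto simp: image_subset_iff)
  have "subring R B" unfolding R_def by (rule generate_ring_is_subring[OF H])
  moreover have "phi ` carrier A \<subseteq> R" unfolding R_def by (rule subsetI, rule generate_ring.incl) blast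
  ultimately have N: "is_submodule R" by (rule subring_is_submodule)
  have "carrier B \<subseteq> R <+> ext_ideal B phi m" if m: "maximalideal m A" for m
    unfolding R_def
    by (rule carrier_subset_generate_ring_set_add_quotient[OF
          ideal_ext_ideal[OF maximalideal.axioms(1)[OF m]] x xz[OF m] gen[OF m]])
  then have "carrier B \<subseteq> R <+> lincombs (jacobson A) S"
    by (rule carrier_subset_set_add_lincombs_jacobson[OF N fin])
  then have "carrier B \<subseteq> R" by (rule nakayama[OF N finite_S S_carrier])
  with generate_ring_incl[OF H] have "generate_ring B (phi ` carrier A \<union> x ` {..<d}) = carrier B"
    unfolding R_def by (rule subset_antisym)
  thus ?thesis unfolding generates_algebra_def using x by simp
qed

end

theorem proposition3p1:
  fixes A :: "'a ring" and B :: "'b ring" and phi :: "'a \<Rightarrow> 'b"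
    and I :: "'b set" and d :: nat
    and y :: "nat \<Rightarrow> 'b set"
    and z :: "'a set \<Rightarrow> nat \<Rightarrow> 'b set"
  assumes semilocal: "semilocal A"
    and finite_Z: "finite_algebra A B phi"
    and closed_Y: "ideal I B"
    and d_pos: "d > 0"
    and iota_Y: "closed_imm A (B Quot I) (\<lambda>a. I +>\<^bsub>B\<^esub> phi a) d y"
    and iota_m: "\<And>m. maximalideal m A \<Longrightarrow>
          closed_imm A (B Quot ext_ideal B phi m) (\<lambda>a. ext_ideal B phi m +>\<^bsub>B\<^esub> phi a) d (z m)"
    and compat: "\<And>m i. maximalideal m A \<Longrightarrow> i < d \<Longrightarrow>
          (\<exists>u \<in> y i. \<exists>v \<in> z m i. u \<ominus>\<^bsub>B\<^esub> v \<in> I <+>\<^bsub>B\<^esub> ext_ideal B phi m)"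
  shows "\<exists>x. closed_imm A B phi d x \<and>
           (\<forall>i<d. I +>\<^bsub>B\<^esub> x i = y i) \<and>
           (\<forall>m. maximalideal m A \<longrightarrow> (\<forall>i<d. ext_ideal B phi m +>\<^bsub>B\<^esub> x i = z m i))"
proof -
  have cring_A: "cring A" and fin: "finite {m. maximalideal m A}"
    using semilocal unfolding semilocal_def by simp_all
  obtain S where B: "cring B" "phi \<in> ring_hom A B" and S: "finite S" "S \<subseteq> carrier B"
      "\<forall>b\<in>carrier B. \<exists>c\<in>S \<rightarrow> carrier A. b = (\<Oplus>\<^bsub>B\<^esub>s\<in>S. phi (c s) \<otimes>\<^bsub>B\<^esub> s)"
    using finite_Z unfolding finite_algebra_def by blast
  interpret finite_comm_algebra B A phi S
    using cring_A B S by (simp add: finite_comm_algebra_def finite_comm_algebra_axioms_def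
        comm_algebra_def comm_algebra_axioms_def)
  have "\<forall>i\<in>{..<d}. \<exists>x. x \<in> carrier B \<and> I +>\<^bsub>B\<^esub> x = y i \<and>
      (\<forall>m. maximalideal m A \<longrightarrow> ext_ideal B phi m +>\<^bsub>B\<^esub> x = z m i)" (is "\<forall>i\<in>_. \<exists>x. ?lift i x")
  proof
    fix i assume "i \<in> {..<d}"
    then have i: "i < d" by simp
    show "\<exists>x. ?lift i x"
    proof (rule exists_lift_to_fibres[OF fin closed_Y _ _ compat[OF _ i]])
      show "y i \<in> carrier (B Quot I)" using iota_Y i unfolding generates_algebra_def by blast
      show "z m i \<in> carrier (B Quot ext_ideal B phi m)" if "maximalideal m A" for m
        using iota_m[OF that] i unfolding generates_algebra_def by blast
    qed
  qed
  from bchoice[OF this] obtain x where x: "\<forall>i\<in>{..<d}. ?lift i (x i)" ..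
  have "closed_imm A B phi d x"
    by (rule generates_algebra_if_generates_fibres[OF fin _ iota_m]) (use x in auto)
  then show ?thesis using x by auto
qed

end
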